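(* Let $X$ be a Dedekind complete Riesz space with weak order unit $e$ and conditional expectation operator $T$ with $Te=e$, and assume $X$ is $T$-universally complete. Let $(x_{n})$ be an order bounded sequence in $X_{+}$. If $\sum_{n=1}^{\infty}Tx_{n}\in X^{u}$, then $\limsup_{n\to\infty}x_{n}=0$.
   Context: A conditional expectation operator on $X$ is a strictly positive, order continuous linear projection $T$ with $Te=e$ whose range is a Dedekind complete Riesz subspace. $X$ is $T$-universally complete if every increasing net $(x_\alpha)$ in $X$ with $(Tx_\alpha)$ order bounded in $X^u$ is order convergent in $X$; $X^u$ is the universal completion of $X$. The sum $\sum_n Tx_n$ is the supremum of its partial sums taken in the sup-completion $X^{s}$ of $X$ (the Dedekind complete lattice cone of classes of nonempty upward directed subsets of $X$, which contains $X^u_+$). $\limsup_n x_n=\inf_n\sup_{k\ge n}x_k$. *)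

theory Defs
  imports Complex_Main "HOL-Library.Lattice_Algebras"
begin

text \<open>Riesz spaces: real vector spaces with a compatible lattice order.
  Dedekind completeness is the class conditionally_complete_lattice.\<close>

definition directed_on :: "'i set \<Rightarrow> ('i \<Rightarrow> 'i \<Rightarrow> bool) \<Rightarrow> bool" where
  "directed_on I le \<longleftrightarrow> I \<noteq> {} \<and> (\<forall>i\<in>I. le i i)
     \<and> (\<forall>i\<in>I. \<forall>j\<in>I. \<forall>k\<in>I. le i j \<and> le j k \<longrightarrow> le i k)
     \<and> (\<forall>i\<in>I. \<forall>j\<in>I. \<exists>k\<in>I. le i k \<and> le j k)"

definition rabs :: "'a::lattice_ab_group_add \<Rightarrow> 'a" where
  "rabs x = sup x (- x)"

definition order_conv ::
  "'i set \<Rightarrow> ('i \<Rightarrow> 'i \<Rightarrow> bool) \<Rightarrow> ('i \<Rightarrow> 'a::lattice_ab_group_add) \<Rightarrow> 'a \<Rightarrow> bool" where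
  "order_conv I le x l \<longleftrightarrow> (\<exists>D. D \<noteq> {}
      \<and> (\<forall>a\<in>D. \<forall>b\<in>D. \<exists>c\<in>D. c \<le> a \<and> c \<le> b)
      \<and> (\<forall>d\<in>D. 0 \<le> d) \<and> (\<forall>z. (\<forall>d\<in>D. z \<le> d) \<longrightarrow> z \<le> 0)
      \<and> (\<forall>d\<in>D. \<exists>i0\<in>I. \<forall>i\<in>I. le i0 i \<longrightarrow> rabs (x i - l) \<le> d))"

definition weak_order_unit :: "'a::lattice_ab_group_add \<Rightarrow> bool" where
  "weak_order_unit e \<longleftrightarrow> 0 < e \<and> (\<forall>x. inf (rabs x) e = 0 \<longrightarrow> x = 0)"

definition linear_op :: "('a::real_vector \<Rightarrow> 'b::real_vector) \<Rightarrow> bool" where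
  "linear_op T \<longleftrightarrow> (\<forall>x y. T (x + y) = T x + T y) \<and> (\<forall>c x. T (c *\<^sub>R x) = c *\<^sub>R T x)"

text \<open>Order continuity (nets indexed by subsets of the space itself).\<close>
definition order_continuous ::
  "('a::{ordered_real_vector,lattice_ab_group_add} \<Rightarrow> 'a) \<Rightarrow> bool" where
  "order_continuous T \<longleftrightarrow> (\<forall>(I::'a set) le (x::'a \<Rightarrow> 'a).
      directed_on I le \<and> order_conv I le x 0 \<longrightarrow> order_conv I le (\<lambda>i. T (x i)) 0)"

definition cond_exp_op ::
  "('a::{ordered_real_vector,lattice_ab_group_add} \<Rightarrow> 'a) \<Rightarrow> 'a \<Rightarrow> bool" where
  "cond_exp_op T e \<longleftrightarrow> linear_op T
     \<and> (\<forall>x. 0 < x \<longrightarrow> 0 < T x)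
     \<and> order_continuous T
     \<and> (\<forall>x. T (T x) = T x)
     \<and> T e = e
     \<and> (\<forall>a\<in>range T. \<forall>b\<in>range T. sup a b \<in> range T)
     \<and> (\<forall>S. S \<subseteq> range T \<and> S \<noteq> {} \<and> (\<exists>u\<in>range T. \<forall>s\<in>S. s \<le> u) \<longrightarrow>
          (\<exists>m\<in>range T. (\<forall>s\<in>S. s \<le> m) \<and> (\<forall>u\<in>range T. (\<forall>s\<in>S. s \<le> u) \<longrightarrow> m \<le> u)))"

text \<open>J embeds X into a universal completion Y of X: Y is Dedekind complete (class)
  and laterally complete, J is an injective Riesz homomorphism and J(X) is order dense in Y.\<close>
definition universal_completion ::
  "('a::{ordered_real_vector,lattice_ab_group_add} \<Rightarrow>
    'b::{ordered_real_vector,lattice_ab_group_add,conditionally_complete_lattice}) \<Rightarrow> bool" where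
  "universal_completion J \<longleftrightarrow> linear_op J \<and> inj J
     \<and> (\<forall>a b. J (sup a b) = sup (J a) (J b))
     \<and> (\<forall>S::'b set. (\<forall>s\<in>S. 0 \<le> s) \<and> (\<forall>s\<in>S. \<forall>t\<in>S. s \<noteq> t \<longrightarrow> inf s t = 0) \<longrightarrow> bdd_above S)
     \<and> (\<forall>y::'b. 0 < y \<longrightarrow> (\<exists>x::'a. 0 < J x \<and> J x \<le> y))"

definition T_universally_complete ::
  "('a::{ordered_real_vector,lattice_ab_group_add} \<Rightarrow> 'a) \<Rightarrow>
   ('a \<Rightarrow> 'b::{ordered_real_vector,lattice_ab_group_add,conditionally_complete_lattice}) \<Rightarrow> bool" where
  "T_universally_complete T J \<longleftrightarrow> (\<forall>(I::'a set) le (x::'a \<Rightarrow> 'a).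
      directed_on I le \<and> (\<forall>i\<in>I. \<forall>j\<in>I. le i j \<longrightarrow> x i \<le> x j)
      \<and> (\<exists>a b. \<forall>i\<in>I. a \<le> J (T (x i)) \<and> J (T (x i)) \<le> b)
      \<longrightarrow> (\<exists>l. order_conv I le x l))"

end

theory Submission
  imports Defs
begin

text \<open>Let Y_n = sup_{k \<ge> n} x_k, y = inf_n Y_n, P_n = T x_0 + ... + T x_{n-1}, and let S be the
  supremum of the P_n in X^u. The finite suprema x_n \<squnion> ... \<squnion> x_{n+m} increase to Y_n and are
  dominated by x_n + ... + x_{n+m}; order continuity of T and order density of X in X^u then give
  T y \<le> T Y_n \<le> S - P_n for every n. Taking the supremum over n yields S \<le> S - T y, so T y \<le> 0,
  and strict positivity of T forces y = 0.\<close>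

lemma linear_op_iff_linear: "linear_op T \<longleftrightarrow> linear T"
  by (simp add: linear_op_def linear_iff)

lemma rabs_nonneg: "0 \<le> a \<Longrightarrow> rabs a = a"
  unfolding rabs_def by (simp add: sup_absorb1 order_trans[of "- a" 0 a])

lemma rabs_ge: "a \<le> rabs a"
  unfolding rabs_def by simp

lemma strictly_positive_linear_mono:
  fixes T :: "'a::{real_vector,ordered_ab_group_add} \<Rightarrow> 'b::{real_vector,ordered_ab_group_add}"
  assumes "linear T" and pos: "\<And>x. 0 < x \<Longrightarrow> 0 < T x" and "a \<le> b"
  shows "T a \<le> T b"
proof (cases "a = b")
  case False
  with \<open>a \<le> b\<close> have "0 < T (b - a)" by (intro pos) simp
  then show ?thesis by (simp add: linear_diff[OF \<open>linear T\<close>])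
qed simp

lemma strictly_positive_nonpos_imp_zero:
  fixes T :: "'a::{order,zero} \<Rightarrow> 'b::{order,zero}"
  assumes pos: "\<And>x. 0 < x \<Longrightarrow> 0 < T x" and "0 \<le> y" "T y \<le> 0"
  shows "y = 0"
proof (rule ccontr)
  assume "y \<noteq> 0"
  with \<open>0 \<le> y\<close> have "0 < T y" by (intro pos) (simp add: less_le)
  with \<open>T y \<le> 0\<close> show False by simp
qed

lemma cond_exp_op_linear: "cond_exp_op T e \<Longrightarrow> linear T"
  by (simp add: cond_exp_op_def linear_op_iff_linear)

lemma cond_exp_op_strictly_positive: "cond_exp_op T e \<Longrightarrow> 0 < x \<Longrightarrow> 0 < T x"
  by (simp add: cond_exp_op_def)

lemma cond_exp_op_mono: "cond_exp_op T e \<Longrightarrow> a \<le> b \<Longrightarrow> T a \<le> T b"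
  by (metis strictly_positive_linear_mono cond_exp_op_linear cond_exp_op_strictly_positive)

lemma inj_sup_hom_le_iff:
  fixes J :: "'a::lattice \<Rightarrow> 'b::lattice"
  assumes "inj J" and "\<And>a b. J (sup a b) = sup (J a) (J b)"
  shows "J a \<le> J b \<longleftrightarrow> a \<le> b"
  using assms by (metis injD le_iff_sup)

lemma universal_completion_linear: "universal_completion J \<Longrightarrow> linear J"
  by (simp add: universal_completion_def linear_op_iff_linear)

lemma universal_completion_le_iff: "universal_completion J \<Longrightarrow> J a \<le> J b \<longleftrightarrow> a \<le> b"
  by (rule inj_sup_hom_le_iff) (simp_all add: universal_completion_def)

lemma universal_completion_preserves_Inf_zero:
  assumes J: "universal_completion J"
    and D_nonneg: "\<forall>d\<in>D. 0 \<le> d" and D_Inf: "\<forall>q. (\<forall>d\<in>D. q \<le> d) \<longrightarrow> q \<le> 0"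
    and c: "\<forall>d\<in>D. c \<le> J d"
  shows "c \<le> 0"
proof (rule ccontr)
  assume "\<not> c \<le> 0"
  then have "sup c 0 \<noteq> 0" by (metis le_iff_sup)
  then have "0 < sup c 0" by (simp add: order.strict_iff_order)
  moreover have "\<forall>y. 0 < y \<longrightarrow> (\<exists>x. 0 < J x \<and> J x \<le> y)"
    using J by (simp add: universal_completion_def)
  ultimately obtain x0 where x0: "0 < J x0" "J x0 \<le> sup c 0" by blast
  have J0: "J 0 = 0" using linear_0[OF universal_completion_linear[OF J]] .
  have "x0 \<le> d" if "d \<in> D" for d
  proof -
    have "0 \<le> J d" using D_nonneg that universal_completion_le_iff[OF J, of 0 d] J0 by simp
    with c that have "sup c 0 \<le> J d" by simp
    with x0(2) have "J x0 \<le> J d" by (rule order_trans)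
    then show ?thesis by (simp add: universal_completion_le_iff[OF J])
  qed
  then have "x0 \<le> 0" using D_Inf by blast
  then have "J x0 \<le> J 0" by (simp add: universal_completion_le_iff[OF J])
  with x0(1) J0 show False by simp
qed

fun partial_sup :: "(nat \<Rightarrow> 'a::semilattice_sup) \<Rightarrow> nat \<Rightarrow> nat \<Rightarrow> 'a" where
  "partial_sup x n 0 = x n"
| "partial_sup x n (Suc m) = sup (partial_sup x n m) (x (n + Suc m))"

lemma incseq_partial_sup: "incseq (partial_sup x n)"
  by (rule incseq_SucI) simp

lemma partial_sup_upper: "j \<le> m \<Longrightarrow> x (n + j) \<le> partial_sup x n m"
proof (induction m)
  case (Suc m)
  then show ?case by (cases "j = Suc m") (auto intro: le_supI1)
qed simp

lemma partial_sup_least: "(\<And>j. j \<le> m \<Longrightarrow> x (n + j) \<le> z) \<Longrightarrow> partial_sup x n m \<le> z"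
proof (induction m)
  case (Suc m)
  then show ?case using Suc.prems[of "Suc m"] by simp
qed simp

lemma partial_sup_le_sum:
  fixes x :: "nat \<Rightarrow> 'a::lattice_ab_group_add"
  assumes "\<And>k. 0 \<le> x k"
  shows "partial_sup x n m \<le> (\<Sum>k=n..n+m. x k)"
proof (induction m)
  case (Suc m)
  have "0 \<le> (\<Sum>k=n..n+m. x k)" using assms by (simp add: sum_nonneg)
  with Suc assms show ?case by (simp add: add_increasing add_increasing2)
qed simp

lemma directed_on_range_incseq: "incseq z \<Longrightarrow> directed_on (range z) (\<le>)"
  unfolding directed_on_def by (auto intro: order_trans) (metis incseq_def max.cobounded1 max.cobounded2)

lemma incseq_order_conv_Sup:
  fixes z :: "nat \<Rightarrow> 'a::lattice_ab_group_add"
  assumes inc: "incseq z" and upper: "\<And>m. z m \<le> Y" and least: "\<And>q. (\<And>m. z m \<le> q) \<Longrightarrow> Y \<le> q"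
  shows "order_conv (range z) (\<le>) (\<lambda>i. Y - i) 0"
  unfolding order_conv_def
proof (intro exI[of _ "range (\<lambda>m. Y - z m)"] conjI ballI allI impI)
  fix a b assume "a \<in> range (\<lambda>m. Y - z m)" "b \<in> range (\<lambda>m. Y - z m)"
  then obtain ma mb where "a = Y - z ma" "b = Y - z mb" by auto
  with inc show "\<exists>c\<in>range (\<lambda>m. Y - z m). c \<le> a \<and> c \<le> b"
    by (intro bexI[of _ "Y - z (max ma mb)"]) (auto intro!: diff_left_mono simp: incseq_def)
next
  fix q assume "\<forall>d\<in>range (\<lambda>m. Y - z m). q \<le> d"
  then have "z m \<le> Y - q" for m by (auto simp: le_diff_eq add.commute)
  then have "Y \<le> Y - q" by (rule least)
  then show "q \<le> 0" by (simp add: le_diff_eq)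
next
  fix d assume "d \<in> range (\<lambda>m. Y - z m)"
  then obtain m where d: "d = Y - z m" by auto
  have "rabs (Y - i - 0) \<le> d" if "z m \<le> i" "i \<in> range z" for i
    using that upper d by (auto simp: rabs_nonneg diff_left_mono)
  then show "\<exists>i0\<in>range z. \<forall>i\<in>range z. i0 \<le> i \<longrightarrow> rabs (Y - i - 0) \<le> d" by blast
qed (use upper in auto)

lemma cond_exp_op_incseq_Sup_le:
  assumes T: "cond_exp_op T e" and J: "universal_completion J"
    and inc: "incseq z" and upper: "\<And>m. z m \<le> Y" and least: "\<And>q. (\<And>m. z m \<le> q) \<Longrightarrow> Y \<le> q"
    and b: "\<And>m. J (T (z m)) \<le> b"
  shows "J (T Y) \<le> b"
proof -
  have "order_continuous T" using T by (simp add: cond_exp_op_def)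
  then have "order_conv (range z) (\<le>) (\<lambda>i. T (Y - i)) 0"
    using directed_on_range_incseq[OF inc] incseq_order_conv_Sup[OF inc upper least]
    unfolding order_continuous_def by blast
  then obtain D where D_nonneg: "\<forall>d\<in>D. 0 \<le> d" and D_Inf: "\<forall>q. (\<forall>d\<in>D. q \<le> d) \<longrightarrow> q \<le> 0"
    and D_dominates: "\<forall>d\<in>D. \<exists>i0\<in>range z. \<forall>i\<in>range z. i0 \<le> i \<longrightarrow> rabs (T (Y - i) - 0) \<le> d"
    unfolding order_conv_def by blast
  have linT: "linear T" and linJ: "linear J"
    using cond_exp_op_linear[OF T] universal_completion_linear[OF J] .
  have "J (T Y) - b \<le> J d" if "d \<in> D" for d
  proof -
    obtain m where "rabs (T (Y - z m)) \<le> d" using D_dominates \<open>d \<in> D\<close> by fastforce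
    then have T_tail: "J (T (Y - z m)) \<le> J d"
      using rabs_ge universal_completion_le_iff[OF J] by (metis order_trans)
    have "J (T Y) - b \<le> J (T Y) - J (T (z m))" using b by (rule diff_left_mono)
    also have "\<dots> = J (T (Y - z m))" by (simp add: linear_diff[OF linT] linear_diff[OF linJ])
    finally show ?thesis using T_tail by (rule order_trans)
  qed
  then have "J (T Y) - b \<le> 0" using universal_completion_preserves_Inf_zero[OF J D_nonneg D_Inf] by blast
  then show ?thesis by simp
qed

lemma cond_exp_op_tail_Sup_le:
  fixes x :: "nat \<Rightarrow> 'a::{ordered_real_vector,lattice_ab_group_add,conditionally_complete_lattice}"
  assumes T: "cond_exp_op T e" and J: "universal_completion J"
    and x_nonneg: "\<And>k. 0 \<le> x k" and bdd: "bdd_above (range x)"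
    and s: "\<And>n. J (\<Sum>k<n. T (x k)) \<le> s"
  shows "J (T (SUP k\<in>{n..}. x k)) \<le> s - J (\<Sum>k<n. T (x k))"
proof (rule cond_exp_op_incseq_Sup_le[OF T J incseq_partial_sup])
  show "partial_sup x n m \<le> (SUP k\<in>{n..}. x k)" for m
    by (intro partial_sup_least cSUP_upper bdd_above_mono[OF bdd image_mono]) simp_all
  show "(SUP k\<in>{n..}. x k) \<le> q" if "\<And>m. partial_sup x n m \<le> q" for q
  proof (intro cSUP_least)
    fix k assume "k \<in> {n..}"
    then have "x (n + (k - n)) \<le> partial_sup x n (k - n)" by (intro partial_sup_upper) simp
    with \<open>k \<in> {n..}\<close> that show "x k \<le> q" by (metis atLeast_iff le_add_diff_inverse order_trans)
  qed simp
  have linT: "linear T" and linJ: "linear J"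
    using cond_exp_op_linear[OF T] universal_completion_linear[OF J] .
  show "J (T (partial_sup x n m)) \<le> s - J (\<Sum>k<n. T (x k))" for m
  proof -
    have "(\<Sum>k<Suc (n + m). T (x k)) = (\<Sum>k<n. T (x k)) + (\<Sum>k=n..n+m. T (x k))"
      by (metis atLeast0LessThan atLeastLessThanSuc_atLeastAtMost le_add1 le_SucI
          sum.atLeastLessThan_concat zero_le)
    then have tail_sum: "T (\<Sum>k=n..n+m. x k) = (\<Sum>k<Suc (n + m). T (x k)) - (\<Sum>k<n. T (x k))"
      by (simp add: linear_sum[OF linT])
    have "T (partial_sup x n m) \<le> T (\<Sum>k=n..n+m. x k)"
      by (rule cond_exp_op_mono[OF T partial_sup_le_sum[OF x_nonneg]])
    then have "J (T (partial_sup x n m)) \<le> J (T (\<Sum>k=n..n+m. x k))"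
      by (simp add: universal_completion_le_iff[OF J])
    also have "\<dots> = J (\<Sum>k<Suc (n + m). T (x k)) - J (\<Sum>k<n. T (x k))"
      by (simp add: tail_sum linear_diff[OF linJ])
    also have "\<dots> \<le> s - J (\<Sum>k<n. T (x k))" using s by (rule diff_right_mono)
    finally show ?thesis .
  qed
qed

lemma tail_Sup_nonneg:
  fixes x :: "nat \<Rightarrow> 'a::{conditionally_complete_lattice,zero}"
  assumes "\<And>k. 0 \<le> x k" and "bdd_above (range x)"
  shows "0 \<le> (SUP k\<in>{n..}. x k)"
proof -
  have "x n \<le> (SUP k\<in>{n..}. x k)"
    by (rule cSUP_upper) (simp_all add: bdd_above_mono[OF assms(2) image_mono])
  then show ?thesis by (rule order_trans[OF assms(1)])
qed

lemma cond_exp_op_limsup_le: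
  fixes x :: "nat \<Rightarrow> 'a::{ordered_real_vector,lattice_ab_group_add,conditionally_complete_lattice}"
  assumes T: "cond_exp_op T e" and J: "universal_completion J"
    and x_nonneg: "\<And>k. 0 \<le> x k" and bdd: "bdd_above (range x)"
    and s: "\<And>n. J (\<Sum>k<n. T (x k)) \<le> s"
  shows "J (T (INF n. SUP k\<in>{n..}. x k)) \<le> s - J (\<Sum>k<n. T (x k))"
proof -
  have "(INF n. SUP k\<in>{n..}. x k) \<le> (SUP k\<in>{n..}. x k)"
    by (intro cINF_lower bdd_belowI[of _ 0]) (auto intro: tail_Sup_nonneg[OF x_nonneg bdd])
  then have "J (T (INF n. SUP k\<in>{n..}. x k)) \<le> J (T (SUP k\<in>{n..}. x k))"
    by (simp add: universal_completion_le_iff[OF J] cond_exp_op_mono[OF T])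
  also have "\<dots> \<le> s - J (\<Sum>k<n. T (x k))" by (rule cond_exp_op_tail_Sup_le[OF T J x_nonneg bdd s])
  finally show ?thesis .
qed

theorem mainTheorem7:
  fixes T :: "'a::{ordered_real_vector,lattice_ab_group_add,conditionally_complete_lattice} \<Rightarrow> 'a"
    and e :: 'a
    and J :: "'a \<Rightarrow> 'b::{ordered_real_vector,lattice_ab_group_add,conditionally_complete_lattice}"
    and x :: "nat \<Rightarrow> 'a"
  assumes "weak_order_unit e"
    and "cond_exp_op T e"
    and "universal_completion J"
    and "T_universally_complete T J"
    and "\<forall>n. 0 \<le> x n"
    and "\<exists>u. \<forall>n. x n \<le> u"
    and "\<exists>s. \<forall>n. J (\<Sum>k<n. T (x k)) \<le> s"
  shows "(INF n. SUP k\<in>{n..}. x k) = 0"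
proof -
  note T = assms(2) and J = assms(3)
  have x_nonneg: "\<And>k. 0 \<le> x k" and bdd_x: "bdd_above (range x)"
    using assms(5,6) by auto
  obtain s where "\<forall>n. J (\<Sum>k<n. T (x k)) \<le> s" using assms(7) ..
  then have bdd_sums: "bdd_above (range (\<lambda>n. J (\<Sum>k<n. T (x k))))" by auto
  define S where "S = (SUP n. J (\<Sum>k<n. T (x k)))"
  define y where "y = (INF n. SUP k\<in>{n..}. x k)"
  have "J (\<Sum>k<n. T (x k)) \<le> S" for n unfolding S_def by (rule cSUP_upper[OF UNIV_I bdd_sums])
  then have "J (T y) \<le> S - J (\<Sum>k<n. T (x k))" for n
    unfolding y_def by (rule cond_exp_op_limsup_le[OF T J x_nonneg bdd_x])
  then have "S \<le> S - J (T y)" unfolding S_def by (intro cSUP_least) (auto simp: algebra_simps)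
  then have "J (T y) \<le> J 0" by (simp add: linear_0[OF universal_completion_linear[OF J]])
  then have "T y \<le> 0" by (simp add: universal_completion_le_iff[OF J])
  moreover have "0 \<le> y" unfolding y_def
    by (intro cINF_greatest tail_Sup_nonneg[OF x_nonneg bdd_x]) simp
  ultimately have "y = 0"
    by (intro strictly_positive_nonpos_imp_zero[of T] cond_exp_op_strictly_positive[OF T])
  then show ?thesis unfolding y_def .
qed

end
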